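(* Let $\pi$ be a probability density on $\mathbb{R}^d$ with $\pi(x)>0$ for all $x$ and $\log\pi\in C^1(\mathbb{R}^d)$, and assume: (i) there is $\gamma>0$ such that $\liminf_{|x_1|\to\infty}\Big(\inf_{(x_2,\dots,x_d)\in\mathbb{R}^{d-1}}\big|\frac{\partial\log\pi(x)}{\partial x_1}\big|\,\|x\|_2^{\gamma}\Big)>0$; (ii) for $X\sim\pi$ there is $\beta>0$ such that $\limsup_{t\to\infty}\mathbb{P}(\|X\|_2>t)\,e^{t^\beta}<\infty$. For $\lambda>0$ let $\pi^{(\lambda)}(x):=\lambda^{-1}\pi(x_1/\lambda,x_2,\dots,x_d)$, fix $\sigma>0$, and let $P^M_\lambda$ be the Metropolis--Hastings kernel with target $\pi^{(\lambda)}$ and candidate kernel $N\big(x+\frac{\sigma^2}{2}\nabla\log\pi^{(\lambda)}(x),\sigma^2\mathbb{I}_d\big)$. Then there exists $\alpha>0$ such that $\limsup_{\lambda\downarrow0}\mathrm{Gap}(P^M_\lambda)\,e^{\lambda^{-\alpha}}<\infty$, and $\alpha$ can be taken as $\alpha=\min\{\beta/2,\beta/\gamma,2/3\}$.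
   Context: Metropolis--Hastings kernel with target density $\pi$ and candidate kernel $Q(x,dy)=q(x,y)dy$: $P(x,dy)=\alpha(x,y)Q(x,dy)+r(x)\delta_x(dy)$ with acceptance probability $\min\{1,\pi(y)q(y,x)/(\pi(x)q(x,y))\}$ and $r(x)$ the rejection probability. $\mathrm{Gap}(P)=\inf_{f\in L^2_{0,1}(\pi)}\frac12\int (f(y)-f(x))^2\pi(dx)P(x,dy)$ with $L^2_{0,1}(\pi)=\{f:\mathbb{E}_\pi f=0,\mathrm{Var}_\pi f=1\}$. *)

theory Defs
  imports "HOL-Analysis.Analysis" "HOL-Probability.Probability"
begin

text \<open>Vectors in R^d are modelled as real ^ 'd for a finite index type 'd;
  the distinguished coordinate x_1 of the paper is an arbitrary fixed index k.\<close>

definition grad :: "(real ^ 'd \<Rightarrow> real) \<Rightarrow> real ^ 'd \<Rightarrow> real ^ 'd" where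
  "grad f x = (\<chi> i. frechet_derivative f (at x) (axis i 1))"

definition log_C1 :: "(real ^ 'd \<Rightarrow> real) \<Rightarrow> bool" where
  "log_C1 f \<longleftrightarrow> (\<exists>g. continuous_on UNIV g \<and>
      (\<forall>x. ((\<lambda>y. ln (f y)) has_derivative (\<lambda>h. g x \<bullet> h)) (at x)))"

definition rescale_dens :: "'d \<Rightarrow> real \<Rightarrow> (real ^ 'd \<Rightarrow> real) \<Rightarrow> real ^ 'd \<Rightarrow> real" where
  "rescale_dens k l p x = p (\<chi> i. if i = k then x $ i / l else x $ i) / l"

definition gauss_dens :: "real \<Rightarrow> real ^ 'd \<Rightarrow> real ^ 'd \<Rightarrow> real" where
  "gauss_dens s m y = (2 * pi * s\<^sup>2) powr (- real CARD('d) / 2) * exp (- (norm (y - m))\<^sup>2 / (2 * s\<^sup>2))"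

definition mala_q :: "real \<Rightarrow> (real ^ 'd \<Rightarrow> real) \<Rightarrow> real ^ 'd \<Rightarrow> real ^ 'd \<Rightarrow> real" where
  "mala_q s p x y = gauss_dens s (x + (s\<^sup>2 / 2) *\<^sub>R grad (\<lambda>z. ln (p z)) x) y"

definition mh_acc :: "(real ^ 'd \<Rightarrow> real) \<Rightarrow> (real ^ 'd \<Rightarrow> real ^ 'd \<Rightarrow> real) \<Rightarrow> real ^ 'd \<Rightarrow> real ^ 'd \<Rightarrow> real" where
  "mh_acc p q x y = min 1 (p y * q y x / (p x * q x y))"

definition mh_rej :: "(real ^ 'd \<Rightarrow> real) \<Rightarrow> (real ^ 'd \<Rightarrow> real ^ 'd \<Rightarrow> real) \<Rightarrow> real ^ 'd \<Rightarrow> real" where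
  "mh_rej p q x = 1 - enn2real (\<integral>\<^sup>+ y. ennreal (mh_acc p q x y * q x y) \<partial>lborel)"

text \<open>Integral of a nonnegative function g against the MH kernel
  P(x,dy) = alpha(x,y) q(x,y) dy + r(x) delta_x(dy).\<close>
definition mh_kernel_int :: "(real ^ 'd \<Rightarrow> real) \<Rightarrow> (real ^ 'd \<Rightarrow> real ^ 'd \<Rightarrow> real) \<Rightarrow> real ^ 'd \<Rightarrow> (real ^ 'd \<Rightarrow> ennreal) \<Rightarrow> ennreal" where
  "mh_kernel_int p q x g = (\<integral>\<^sup>+ y. ennreal (mh_acc p q x y * q x y) * g y \<partial>lborel) + ennreal (mh_rej p q x) * g x"

definition L2_01 :: "(real ^ 'd \<Rightarrow> real) \<Rightarrow> (real ^ 'd \<Rightarrow> real) set" where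
  "L2_01 p = {f. f \<in> borel_measurable lborel \<and>
      integrable (density lborel (\<lambda>x. ennreal (p x))) f \<and>
      integrable (density lborel (\<lambda>x. ennreal (p x))) (\<lambda>x. (f x)\<^sup>2) \<and>
      (\<integral>x. f x \<partial>density lborel (\<lambda>x. ennreal (p x))) = 0 \<and>
      (\<integral>x. (f x - (\<integral>z. f z \<partial>density lborel (\<lambda>x. ennreal (p x))))\<^sup>2 \<partial>density lborel (\<lambda>x. ennreal (p x))) = 1}"

definition mh_gap :: "(real ^ 'd \<Rightarrow> real) \<Rightarrow> (real ^ 'd \<Rightarrow> real ^ 'd \<Rightarrow> real) \<Rightarrow> ennreal" where
  "mh_gap p q = (INF f\<in>L2_01 p. (1/2) * (\<integral>\<^sup>+ x. mh_kernel_int p q x (\<lambda>y. ennreal ((f y - f x)\<^sup>2))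
        \<partial>density lborel (\<lambda>x. ennreal (p x))))"

end

(* Testing the Dirichlet form with the normalized indicator (1_A - a) / sqrt (a (1 - a)),
   a = pi(A), bounds the gap by 1 / (a (1 - a)) times the probability that a stationary step
   starts in A and is accepted.  Condition (i) provides a unit ball K, away from the origin in
   the direction of x_1, on which |d_1 log pi| >= c > 0; let A be its image under the rescaling.
   From A the MALA drift (sigma^2 / (2 lambda)) d_1 log pi throws the proposal out of the strip
   N = {|y_1| <= sigma^2 c / (8 lambda)}, except with probability at most
   2^(d/2) exp (- sigma^2 c^2 / (64 lambda^2)), and by reversibility the accepted moves that end
   outside N have mass at most pi^(lambda)(N^c) <= P(|X| > sigma^2 c / (8 lambda^2)), which
   decays like exp (- (sigma^2 c / (8 lambda^2))^beta) by (ii).  Both terms are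
   O(exp (- lambda^(-alpha))) for every alpha <= min 1 (beta / 2), in particular for the alpha
   of the statement. *)

theory Submission
  imports Defs
begin

section \<open>Gaussian densities\<close>

lemma gauss_dens_eq_prod_normal_density:
  fixes m y :: "real ^ 'd"
  assumes "s > 0"
  shows "gauss_dens s m y = (\<Prod>b\<in>Basis. normal_density (m \<bullet> b) s (y \<bullet> b))"
proof -
  define A where "A = 2 * pi * s\<^sup>2"
  have A: "A > 0" using assms by (simp add: A_def)
  have "(\<Prod>b\<in>Basis. normal_density (m \<bullet> b) s (y \<bullet> b))
      = (\<Prod>b\<in>(Basis :: (real ^ 'd) set). 1 / sqrt A) *
        (\<Prod>b\<in>Basis. exp (- ((y \<bullet> b) - (m \<bullet> b))\<^sup>2 / (2 * s\<^sup>2)))"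
    unfolding normal_density_def prod.distrib A_def ..
  also have "(\<Prod>b\<in>(Basis :: (real ^ 'd) set). 1 / sqrt A) = A powr (- real CARD('d) / 2)"
  proof -
    have "1 / sqrt A = A powr (- (1 / 2))"
      using A by (subst powr_minus_divide, subst powr_half_sqrt) auto
    then show ?thesis
      using A by (simp add: powr_power)
  qed
  also have "(\<Prod>b\<in>Basis. exp (- ((y \<bullet> b) - (m \<bullet> b))\<^sup>2 / (2 * s\<^sup>2)))
      = exp (\<Sum>b\<in>(Basis :: (real ^ 'd) set). - ((y - m) \<bullet> b)\<^sup>2 / (2 * s\<^sup>2))"
    by (simp add: exp_sum inner_diff_left)
  also have "(\<Sum>b\<in>(Basis :: (real ^ 'd) set). - ((y - m) \<bullet> b)\<^sup>2 / (2 * s\<^sup>2)) = - (norm (y - m))\<^sup>2 / (2 * s\<^sup>2)"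
  proof -
    have "(norm (y - m))\<^sup>2 = (\<Sum>b\<in>(Basis :: (real ^ 'd) set). ((y - m) \<bullet> b)\<^sup>2)"
      unfolding power2_norm_eq_inner by (subst euclidean_inner) (simp add: power2_eq_square)
    then show ?thesis
      unfolding sum_divide_distrib[symmetric] sum_negf by simp
  qed
  finally show ?thesis by (simp add: gauss_dens_def A_def)
qed

lemma nn_integral_gauss_dens:
  fixes m :: "real ^ 'd"
  assumes "s > 0"
  shows "(\<integral>\<^sup>+y. ennreal (gauss_dens s m y) \<partial>lborel) = 1"
proof -
  have "(\<integral>\<^sup>+y. ennreal (gauss_dens s m y) \<partial>lborel)
      = (\<integral>\<^sup>+y. (\<Prod>b\<in>Basis. ennreal (normal_density (m \<bullet> b) s (y \<bullet> b))) \<partial>lborel)"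
    by (simp add: gauss_dens_eq_prod_normal_density[OF assms] prod_ennreal)
  also have "\<dots> = (\<Prod>b\<in>Basis. (\<integral>\<^sup>+x. ennreal (normal_density (m \<bullet> b) s x) \<partial>lborel))"
    by (rule nn_integral_lborel_prod) auto
  also have "\<dots> = 1"
  proof (rule prod.neutral, intro ballI)
    fix b :: "real ^ 'd"
    interpret prob_space "density lborel (normal_density (m \<bullet> b) s)"
      using assms by (rule prob_space_normal_density)
    show "(\<integral>\<^sup>+x. ennreal (normal_density (m \<bullet> b) s x) \<partial>lborel) = 1"
      using emeasure_space_1 by (simp add: emeasure_density)
  qed
  finally show ?thesis .
qed

lemma gauss_dens_measurable[measurable]: "gauss_dens s m \<in> borel_measurable borel"
  unfolding gauss_dens_def by measurable

lemma gauss_dens_nonneg: "gauss_dens s m y \<ge> 0"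
  unfolding gauss_dens_def by simp

lemma gauss_dens_le_widened:
  fixes m y :: "real ^ 'd"
  assumes s: "s > 0" and t: "0 \<le> t" "t \<le> norm (y - m)"
  shows "gauss_dens s m y
       \<le> 2 powr (real CARD('d) / 2) * exp (- t\<^sup>2 / (4 * s\<^sup>2)) * gauss_dens (sqrt 2 * s) m y"
proof -
  define n where "n = norm (y - m)"
  define A where "A = 2 * pi * s\<^sup>2"
  define e where "e = - real CARD('d) / 2"
  have A: "A > 0" using s by (simp add: A_def)
  have "t\<^sup>2 \<le> n\<^sup>2" using t by (intro power_mono) (auto simp: n_def)
  then have "- n\<^sup>2 / (2 * s\<^sup>2) \<le> - t\<^sup>2 / (4 * s\<^sup>2) + - n\<^sup>2 / (4 * s\<^sup>2)"
    using s by (simp add: field_simps)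
  then have ex: "exp (- n\<^sup>2 / (2 * s\<^sup>2)) \<le> exp (- t\<^sup>2 / (4 * s\<^sup>2)) * exp (- n\<^sup>2 / (4 * s\<^sup>2))"
    by (simp add: exp_add[symmetric])
  have sq: "(sqrt 2 * s)\<^sup>2 = 2 * s\<^sup>2" by (simp add: power_mult_distrib)
  have "gauss_dens (sqrt 2 * s) m y = (2 * A) powr e * exp (- n\<^sup>2 / (4 * s\<^sup>2))"
    unfolding gauss_dens_def sq by (simp add: A_def e_def n_def mult_ac)
  then have wide: "gauss_dens (sqrt 2 * s) m y = 2 powr e * A powr e * exp (- n\<^sup>2 / (4 * s\<^sup>2))"
    using A by (simp add: powr_mult)
  have two: "2 powr (real CARD('d) / 2) * 2 powr e = 1"
    by (simp add: e_def powr_add[symmetric])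
  have "gauss_dens s m y = A powr e * exp (- n\<^sup>2 / (2 * s\<^sup>2))"
    by (simp add: gauss_dens_def A_def e_def n_def)
  also have "\<dots> \<le> A powr e * (exp (- t\<^sup>2 / (4 * s\<^sup>2)) * exp (- n\<^sup>2 / (4 * s\<^sup>2)))"
    by (rule mult_left_mono[OF ex]) simp
  also have "\<dots> = 2 powr (real CARD('d) / 2) * exp (- t\<^sup>2 / (4 * s\<^sup>2)) * gauss_dens (sqrt 2 * s) m y"
    unfolding wide using two by (simp add: mult_ac)
  finally show ?thesis .
qed

lemma gauss_dens_coord_tail:
  fixes m :: "real ^ 'd"
  assumes s: "s > 0" and t: "t \<ge> 0" and N: "\<And>y. y \<in> N \<Longrightarrow> t \<le> \<bar>y $ k - m $ k\<bar>"
  shows "(\<integral>\<^sup>+y. ennreal (gauss_dens s m y * indicator N y) \<partial>lborel)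
          \<le> ennreal (2 powr (real CARD('d) / 2) * exp (- t\<^sup>2 / (4 * s\<^sup>2)))"
proof -
  define C where "C = 2 powr (real CARD('d) / 2) * exp (- t\<^sup>2 / (4 * s\<^sup>2))"
  have C: "C \<ge> 0" by (simp add: C_def)
  have "gauss_dens s m y * indicator N y \<le> C * gauss_dens (sqrt 2 * s) m y" for y
  proof (cases "y \<in> N")
    case True
    then have "t \<le> norm (y - m)"
      using N component_le_norm_cart[of "y - m" k] by fastforce
    then show ?thesis
      using True gauss_dens_le_widened[OF s t] by (simp add: C_def)
  qed (use gauss_dens_nonneg[of "sqrt 2 * s" m y] C in simp)
  then have "(\<integral>\<^sup>+y. ennreal (gauss_dens s m y * indicator N y) \<partial>lborel)
      \<le> (\<integral>\<^sup>+y. ennreal C * ennreal (gauss_dens (sqrt 2 * s) m y) \<partial>lborel)"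
    using gauss_dens_nonneg[of "sqrt 2 * s" m] C
    by (intro nn_integral_mono) (simp add: ennreal_mult[symmetric] ennreal_leI)
  also have "\<dots> = ennreal C"
    using s by (simp add: nn_integral_cmult nn_integral_gauss_dens)
  finally show ?thesis unfolding C_def .
qed

section \<open>Rescaling one coordinate\<close>

definition scale_coord :: "'d::finite \<Rightarrow> real \<Rightarrow> real ^ 'd \<Rightarrow> real ^ 'd" where
  "scale_coord k c x = (\<chi> i. if i = k then c * x $ i else x $ i)"

lemma scale_coord_nth[simp]: "scale_coord k c x $ i = (if i = k then c * x $ i else x $ i)"
  by (simp add: scale_coord_def)

lemma scale_coord_inverse[simp]: "c \<noteq> 0 \<Longrightarrow> scale_coord k (1 / c) (scale_coord k c x) = x"
  by (simp add: vec_eq_iff)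

lemma bounded_linear_scale_coord: "bounded_linear (scale_coord k c)"
  by (auto intro!: linearI simp: linear_conv_bounded_linear[symmetric] vec_eq_iff algebra_simps)

lemma scale_coord_measurable[measurable]: "scale_coord k c \<in> borel_measurable borel"
  by (intro borel_measurable_continuous_onI linear_continuous_on bounded_linear_scale_coord)

lemma rescale_dens_eq: "rescale_dens k l p x = p (scale_coord k (1 / l) x) / l"
proof -
  have "(\<chi> i. if i = k then x $ i / l else x $ i) = scale_coord k (1 / l) x"
    by (simp add: vec_eq_iff)
  then show ?thesis by (simp add: rescale_dens_def)
qed

lemma lborel_eq_density_distr_scale_coord:
  fixes k :: "'d::finite"
  assumes "c \<noteq> 0"
  shows "lborel = density (distr lborel borel (scale_coord k c)) (\<lambda>_. \<bar>c\<bar>)"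
proof -
  define c' where "c' j = (if j = axis k 1 then c else 1)" for j :: "real ^ 'd"
  have "(\<lambda>x. 0 + (\<Sum>j\<in>Basis. (c' j * (x \<bullet> j)) *\<^sub>R j)) = scale_coord k c"
  proof
    fix x :: "real ^ 'd"
    show "0 + (\<Sum>j\<in>Basis. (c' j * (x \<bullet> j)) *\<^sub>R j) = scale_coord k c x"
    proof (subst euclidean_eq_iff, intro ballI)
      fix b :: "real ^ 'd" assume b: "b \<in> Basis"
      then obtain i where i: "b = axis i 1" unfolding Basis_vec_def by auto
      have "(0 + (\<Sum>j\<in>Basis. (c' j * (x \<bullet> j)) *\<^sub>R j)) \<bullet> b = c' b * (x \<bullet> b)"
        using b by simp
      also have "\<dots> = scale_coord k c x \<bullet> b"
        unfolding i by (simp add: c'_def inner_axis axis_eq_axis)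
      finally show "(0 + (\<Sum>j\<in>Basis. (c' j * (x \<bullet> j)) *\<^sub>R j)) \<bullet> b = scale_coord k c x \<bullet> b" .
    qed
  qed
  moreover have "(\<Prod>j\<in>Basis. \<bar>c' j\<bar>) = \<bar>c\<bar>"
  proof -
    have "(\<Prod>j\<in>Basis. \<bar>c' j\<bar>) = (\<Prod>j\<in>Basis. if j = axis k (1::real) then \<bar>c\<bar> else 1)"
      by (rule prod.cong) (auto simp: c'_def)
    also have "\<dots> = \<bar>c\<bar>"
      by (subst prod.delta) (auto simp: Basis_vec_def)
    finally show ?thesis .
  qed
  ultimately show ?thesis
    using lborel_affine_euclidean[of c' 0] assms by (simp add: c'_def)
qed

lemma nn_integral_rescale_dens:
  assumes l: "l > 0" and [measurable]: "p \<in> borel_measurable borel" and p: "\<And>x. p x \<ge> 0"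
    and [measurable]: "g \<in> borel_measurable borel"
  shows "(\<integral>\<^sup>+x. ennreal (rescale_dens k l p x) * g x \<partial>lborel)
       = (\<integral>\<^sup>+u. ennreal (p u) * g (scale_coord k l u) \<partial>lborel)"
proof -
  have "(\<integral>\<^sup>+x. ennreal (rescale_dens k l p x) * g x \<partial>lborel)
      = (\<integral>\<^sup>+x. ennreal (rescale_dens k l p x) * g x
           \<partial>density (distr lborel borel (scale_coord k l)) (\<lambda>_. \<bar>l\<bar>))"
    using l by (subst lborel_eq_density_distr_scale_coord[symmetric]) auto
  also have "\<dots> = (\<integral>\<^sup>+u. ennreal l * (ennreal (rescale_dens k l p (scale_coord k l u)) * g (scale_coord k l u)) \<partial>lborel)"
    using l by (simp add: nn_integral_density nn_integral_distr rescale_dens_eq)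
  also have "\<dots> = (\<integral>\<^sup>+u. ennreal (p u) * g (scale_coord k l u) \<partial>lborel)"
    using l p by (intro nn_integral_cong) (simp add: rescale_dens_eq ennreal_mult''[symmetric] mult.assoc[symmetric])
  finally show ?thesis .
qed

lemma rescale_dens_measurable[measurable]:
  assumes [measurable]: "p \<in> borel_measurable borel"
  shows "rescale_dens k l p \<in> borel_measurable borel"
  unfolding rescale_dens_eq[abs_def] by measurable

lemma emeasure_density_rescale_dens:
  assumes "l > 0" and [measurable]: "p \<in> borel_measurable borel" and "\<And>x. p x \<ge> 0"
    and [measurable]: "B \<in> sets borel"
  shows "emeasure (density lborel (\<lambda>x. ennreal (rescale_dens k l p x))) B
       = emeasure (density lborel (\<lambda>x. ennreal (p x))) (scale_coord k l -` B)"
proof -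
  have [measurable]: "scale_coord k l -` B \<in> sets borel"
    using measurable_sets[OF scale_coord_measurable assms(4)] by simp
  show ?thesis
    using nn_integral_rescale_dens[OF assms(1-3), of "indicator B" k]
    by (simp add: emeasure_density indicator_vimage[symmetric])
qed

lemma nn_integral_rescale_dens_eq:
  assumes "l > 0" and [measurable]: "p \<in> borel_measurable borel" and "\<And>x. p x \<ge> 0"
  shows "(\<integral>\<^sup>+x. ennreal (rescale_dens k l p x) \<partial>lborel) = (\<integral>\<^sup>+x. ennreal (p x) \<partial>lborel)"
  using nn_integral_rescale_dens[OF assms, where g = "\<lambda>_. 1" and k = k] by simp

lemma measure_rescale_dens_vimage:
  assumes l: "l > 0" and [measurable]: "p \<in> borel_measurable borel" and p: "\<And>x. p x \<ge> 0"
    and K_meas[measurable]: "K \<in> sets borel"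
  shows "measure (density lborel (\<lambda>x. ennreal (rescale_dens k l p x))) (scale_coord k (1 / l) -` K)
       = measure (density lborel (\<lambda>x. ennreal (p x))) K"
proof -
  have [measurable]: "scale_coord k (1 / l) -` K \<in> sets borel"
    using measurable_sets[OF scale_coord_measurable K_meas] by simp
  show ?thesis
    using emeasure_density_rescale_dens[OF l _ p, where B = "scale_coord k (1 / l) -` K" and k = k] l
    by (simp add: measure_def vimage_def)
qed

lemma rescale_dens_pos: "l > 0 \<Longrightarrow> (\<And>x. p x > 0) \<Longrightarrow> rescale_dens k l p x > 0"
  by (simp add: rescale_dens_eq)

lemma emeasure_rescale_dens_coord_gt_le:
  assumes l: "l > 0" and [measurable]: "p \<in> borel_measurable borel" and p: "\<And>x. p x \<ge> 0"
  shows "emeasure (density lborel (\<lambda>x. ennreal (rescale_dens k l p x))) {y. r < \<bar>y $ k\<bar>}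
       \<le> emeasure (density lborel (\<lambda>x. ennreal (p x))) {u. r / l < norm u}"
proof -
  have "scale_coord k l -` {y. r < \<bar>y $ k\<bar>} \<subseteq> {u. r / l < norm u}"
  proof
    fix u assume "u \<in> scale_coord k l -` {y. r < \<bar>y $ k\<bar>}"
    then have "r / l < \<bar>u $ k\<bar>"
      using l by (simp add: abs_mult field_simps)
    then show "u \<in> {u. r / l < norm u}"
      using component_le_norm_cart[of u k] by simp
  qed
  then show ?thesis
    by (simp add: emeasure_density_rescale_dens[OF l _ p] emeasure_mono)
qed

lemma grad_eqI:
  assumes "(f has_derivative (\<lambda>h. g \<bullet> h)) (at x)"
  shows "grad f x = g"
proof -
  have "frechet_derivative f (at x) = (\<lambda>h. g \<bullet> h)"
    using frechet_derivative_at[OF assms] by simp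
  then show ?thesis by (simp add: grad_def vec_eq_iff inner_axis)
qed

lemma inner_scale_coord: "a \<bullet> scale_coord k c b = scale_coord k c a \<bullet> b"
  unfolding inner_vec_def by (intro sum.cong) auto

lemma grad_ln_rescale_dens:
  fixes G :: "real ^ 'd \<Rightarrow> real ^ 'd"
  assumes pos: "\<And>x. p x > 0" and G: "\<And>x. ((\<lambda>y. ln (p y)) has_derivative (\<lambda>h. G x \<bullet> h)) (at x)"
    and l: "l > 0"
  shows "grad (\<lambda>z. ln (rescale_dens k l p z)) x = scale_coord k (1 / l) (G (scale_coord k (1 / l) x))"
proof (rule grad_eqI)
  have "(\<lambda>z. ln (rescale_dens k l p z)) = (\<lambda>z. ln (p (scale_coord k (1 / l) z)) - ln l)"
    using l by (simp add: rescale_dens_eq ln_div pos less_imp_neq[OF pos, symmetric])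
  moreover have "((\<lambda>z. ln (p (scale_coord k (1 / l) z))) has_derivative
      (\<lambda>h. G (scale_coord k (1 / l) x) \<bullet> scale_coord k (1 / l) h)) (at x)"
    using has_derivative_compose[OF bounded_linear_imp_has_derivative[OF bounded_linear_scale_coord] G] .
  then have "((\<lambda>z. ln (p (scale_coord k (1 / l) z)) - ln l) has_derivative
      (\<lambda>h. G (scale_coord k (1 / l) x) \<bullet> scale_coord k (1 / l) h - 0)) (at x)"
    by (rule has_derivative_diff[OF _ has_derivative_const])
  ultimately show "((\<lambda>z. ln (rescale_dens k l p z)) has_derivative
      (\<lambda>h. scale_coord k (1 / l) (G (scale_coord k (1 / l) x)) \<bullet> h)) (at x)"
    by (simp add: inner_scale_coord)
qed

section \<open>A conductance bound for Metropolis--Hastings kernels\<close>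

lemma normalized_indicator_in_L2_01:
  fixes P :: "real ^ 'd \<Rightarrow> real"
  assumes [measurable]: "P \<in> borel_measurable borel" and P: "(\<integral>\<^sup>+x. ennreal (P x) \<partial>lborel) = 1"
    and [measurable]: "A \<in> sets borel"
    and a: "a = measure (density lborel (\<lambda>x. ennreal (P x))) A" "0 < a" "a < 1"
  shows "(\<lambda>x. (indicator A x - a) / sqrt (a * (1 - a))) \<in> L2_01 P"
proof -
  define D where "D = density lborel (\<lambda>x. ennreal (P x))"
  define f where "f x = (indicator A x - a) / sqrt (a * (1 - a))" for x
  interpret D: prob_space D
    by standard (simp add: D_def emeasure_density P)
  have [measurable_cong]: "sets D = sets borel" by (simp add: D_def)
  have aD: "measure D A = a" using a by (simp add: D_def)
  have int_ind: "integrable D (indicator A :: _ \<Rightarrow> real)"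
    by (rule D.integrable_const_bound[where B=1]) auto
  have f_sq: "(f x)\<^sup>2 = (indicator A x * (1 - 2 * a) + a\<^sup>2) / (a * (1 - a))" for x
    using a by (simp add: f_def power_divide indicator_def power2_eq_square algebra_simps)
  have f_meas: "f \<in> borel_measurable borel"
    unfolding f_def[abs_def] by measurable
  have int_f: "integrable D f"
    unfolding f_def using int_ind by auto
  have int_f_sq: "integrable D (\<lambda>x. (f x)\<^sup>2)"
    unfolding f_sq using int_ind by auto
  have mean: "(\<integral>x. f x \<partial>D) = 0"
    unfolding f_def using int_ind aD D.prob_space by (simp add: Bochner_Integration.integral_diff)
  have "(\<integral>x. (f x)\<^sup>2 \<partial>D) = (a * (1 - 2 * a) + a\<^sup>2) / (a * (1 - a))"
    unfolding f_sq using int_ind aD D.prob_space by (simp add: Bochner_Integration.integral_add)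
  also have "\<dots> = 1" using a by (simp add: field_simps power2_eq_square)
  finally have "f \<in> L2_01 P"
    using f_meas int_f int_f_sq mean unfolding L2_01_def D_def[symmetric] by simp
  then show ?thesis unfolding f_def .
qed

lemma mult_mh_acc_eq_min:
  assumes "P x > 0" "P y \<ge> 0" "Q x y \<ge> 0" "Q y x \<ge> 0"
  shows "P x * (mh_acc P Q x y * Q x y) = min (P x * Q x y) (P y * Q y x)"
proof (cases "Q x y = 0")
  case True
  then show ?thesis using assms by (simp add: mh_acc_def)
next
  case False
  define u where "u = P x * Q x y"
  define r where "r = P y * Q y x"
  have "u > 0" "r \<ge> 0" using assms False by (simp_all add: u_def r_def)
  then have "u * min 1 (r / u) = min u r"
    by (cases "r \<le> u") (simp_all add: min_def divide_le_eq)
  then show ?thesis by (simp add: mh_acc_def u_def r_def mult_ac)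
qed

text \<open>The probability that a stationary step starts in \<open>A\<close> and its proposal is accepted:
  \<open>P x * mh_acc P Q x y * Q x y = min (P x * Q x y) (P y * Q y x)\<close>.\<close>
definition mh_move_mass ::
    "(real ^ 'd \<Rightarrow> real) \<Rightarrow> (real ^ 'd \<Rightarrow> real ^ 'd \<Rightarrow> real) \<Rightarrow> (real ^ 'd) set \<Rightarrow> ennreal" where
  "mh_move_mass P Q A =
     (\<integral>\<^sup>+x. \<integral>\<^sup>+y. ennreal (min (P x * Q x y) (P y * Q y x) * indicator A x) \<partial>lborel \<partial>lborel)"

lemma nn_integral_swap_symmetric:
  fixes h :: "real ^ 'd \<Rightarrow> real ^ 'd \<Rightarrow> real"
  assumes [measurable]: "(\<lambda>(x, y). h x y) \<in> borel_measurable (borel \<Otimes>\<^sub>M borel)"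
    and sym: "\<And>x y. h x y = h y x" and [measurable]: "B \<in> sets borel"
  shows "(\<integral>\<^sup>+x. \<integral>\<^sup>+y. ennreal (h x y * indicator B y) \<partial>lborel \<partial>lborel)
       = (\<integral>\<^sup>+x. \<integral>\<^sup>+y. ennreal (h x y * indicator B x) \<partial>lborel \<partial>lborel)"
proof -
  have "(\<lambda>z. ennreal (h (fst z) (snd z) * indicator B (snd z))) \<in> borel_measurable (lborel \<Otimes>\<^sub>M lborel)"
    by measurable
  from lborel_pair.Fubini[OF this] show ?thesis
    by (simp add: sym)
qed

lemma mh_dirichlet_form_eq:
  fixes P :: "real ^ 'd \<Rightarrow> real"
  assumes [measurable]: "P \<in> borel_measurable borel" and P: "\<And>x. P x > 0"
    and [measurable]: "(\<lambda>(x, y). Q x y) \<in> borel_measurable (borel \<Otimes>\<^sub>M borel)"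
    and Q: "\<And>x y. Q x y \<ge> 0" and [measurable]: "f \<in> borel_measurable borel"
  shows "(\<integral>\<^sup>+x. mh_kernel_int P Q x (\<lambda>y. ennreal ((f y - f x)\<^sup>2)) \<partial>density lborel (\<lambda>x. ennreal (P x)))
       = (\<integral>\<^sup>+x. \<integral>\<^sup>+y. ennreal (min (P x * Q x y) (P y * Q y x) * (f y - f x)\<^sup>2) \<partial>lborel \<partial>lborel)"
proof -
  have pointwise: "ennreal (P x) * (ennreal (mh_acc P Q x y * Q x y) * ennreal ((f y - f x)\<^sup>2))
      = ennreal (min (P x * Q x y) (P y * Q y x) * (f y - f x)\<^sup>2)" for x y
  proof -
    have "mh_acc P Q x y \<ge> 0"
      using P[of x] P[of y] Q[of x y] Q[of y x] by (simp add: mh_acc_def less_imp_le)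
    then show ?thesis
      using mult_mh_acc_eq_min[of P x y Q] P[of x] P[of y] Q[of x y] Q[of y x]
      by (simp add: ennreal_mult[symmetric] mult.assoc[symmetric])
  qed
  have [measurable]: "(\<lambda>(x, y). mh_acc P Q x y) \<in> borel_measurable (borel \<Otimes>\<^sub>M borel)"
    unfolding mh_acc_def by measurable
  have "(\<integral>\<^sup>+x. mh_kernel_int P Q x (\<lambda>y. ennreal ((f y - f x)\<^sup>2)) \<partial>density lborel (\<lambda>x. ennreal (P x)))
      = (\<integral>\<^sup>+x. ennreal (P x) * (\<integral>\<^sup>+y. ennreal (mh_acc P Q x y * Q x y) * ennreal ((f y - f x)\<^sup>2) \<partial>lborel) \<partial>lborel)"
    by (simp add: mh_kernel_int_def nn_integral_density)
  also have "\<dots> = (\<integral>\<^sup>+x. \<integral>\<^sup>+y. ennreal (min (P x * Q x y) (P y * Q y x) * (f y - f x)\<^sup>2) \<partial>lborel \<partial>lborel)"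
    by (simp add: nn_integral_cmult[symmetric] pointwise)
  finally show ?thesis .
qed

lemma mh_gap_le_move_mass:
  fixes P :: "real ^ 'd \<Rightarrow> real"
  assumes [measurable]: "P \<in> borel_measurable borel" and P: "\<And>x. P x > 0"
    and P_int: "(\<integral>\<^sup>+x. ennreal (P x) \<partial>lborel) = 1"
    and [measurable]: "(\<lambda>(x, y). Q x y) \<in> borel_measurable (borel \<Otimes>\<^sub>M borel)"
    and Q: "\<And>x y. Q x y \<ge> 0" and A_meas[measurable]: "A \<in> sets borel"
    and a: "a = measure (density lborel (\<lambda>x. ennreal (P x))) A" "0 < a" "a < 1"
  shows "mh_gap P Q \<le> ennreal (1 / (a * (1 - a))) * mh_move_mass P Q A"
proof -
  define c where "c = sqrt (a * (1 - a))"
  define f where "f x = (indicator A x - a) / c" for x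
  define H where "H x y = min (P x * Q x y) (P y * Q y x)" for x y
  have c2: "c\<^sup>2 = a * (1 - a)" and "c > 0" using a by (simp_all add: c_def)
  have H: "H x y \<ge> 0" for x y using P[of x] P[of y] Q[of x y] Q[of y x] by (simp add: H_def)
  have H_meas[measurable]: "(\<lambda>(x, y). H x y) \<in> borel_measurable (borel \<Otimes>\<^sub>M borel)"
    unfolding H_def by measurable
  have H_sym: "H x y = H y x" for x y by (simp add: H_def)
  note swap = nn_integral_swap_symmetric[OF H_meas H_sym A_meas]
  have [measurable]: "f \<in> borel_measurable borel" unfolding f_def[abs_def] by measurable
  have pointwise: "H x y * (f y - f x)\<^sup>2 \<le> H x y * indicator A x / c\<^sup>2 + H x y * indicator A y / c\<^sup>2"
    for x y
  proof -
    have "(f y - f x)\<^sup>2 = (indicator A y - indicator A x)\<^sup>2 / c\<^sup>2"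
      by (simp add: f_def power_divide diff_divide_distrib[symmetric])
    also have "\<dots> \<le> (indicator A x + indicator A y) / c\<^sup>2"
      by (intro divide_right_mono) (auto simp: indicator_def)
    finally have "H x y * (f y - f x)\<^sup>2 \<le> H x y * ((indicator A x + indicator A y) / c\<^sup>2)"
      by (rule mult_left_mono[OF _ H])
    then show ?thesis by (simp add: add_divide_distrib distrib_left)
  qed
  have inner: "(\<integral>\<^sup>+y. ennreal (H x y * indicator A x / c\<^sup>2 + H x y * indicator A y / c\<^sup>2) \<partial>lborel)
      = ennreal (1 / c\<^sup>2) * (\<integral>\<^sup>+y. ennreal (H x y * indicator A x) \<partial>lborel)
        + ennreal (1 / c\<^sup>2) * (\<integral>\<^sup>+y. ennreal (H x y * indicator A y) \<partial>lborel)" for x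
    using H[of x] by (simp add: ennreal_plus nn_integral_add nn_integral_cmult[symmetric] ennreal_mult'[symmetric])
  have "mh_gap P Q \<le> 1 / 2 * (\<integral>\<^sup>+x. mh_kernel_int P Q x (\<lambda>y. ennreal ((f y - f x)\<^sup>2))
        \<partial>density lborel (\<lambda>x. ennreal (P x)))"
    unfolding mh_gap_def
    by (rule INF_lower) (use normalized_indicator_in_L2_01[OF _ P_int _ a] in \<open>simp add: f_def c_def\<close>)
  also have "\<dots> = 1 / 2 * (\<integral>\<^sup>+x. \<integral>\<^sup>+y. ennreal (H x y * (f y - f x)\<^sup>2) \<partial>lborel \<partial>lborel)"
    unfolding H_def by (simp add: mh_dirichlet_form_eq P Q)
  also have "\<dots> \<le> 1 / 2 * (\<integral>\<^sup>+x. \<integral>\<^sup>+y.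
      ennreal (H x y * indicator A x / c\<^sup>2 + H x y * indicator A y / c\<^sup>2) \<partial>lborel \<partial>lborel)"
    by (intro mult_left_mono nn_integral_mono ennreal_leI pointwise) simp
  also have "\<dots> = 1 / 2 * (ennreal (1 / c\<^sup>2) * mh_move_mass P Q A + ennreal (1 / c\<^sup>2) * mh_move_mass P Q A)"
    unfolding inner mh_move_mass_def H_def[symmetric]
    by (simp add: nn_integral_add nn_integral_cmult swap)
  also have "\<dots> = ennreal (1 / (a * (1 - a))) * mh_move_mass P Q A"
    by (simp add: c2 mult_2[symmetric] mult.assoc[symmetric] ennreal_divide_times)
  finally show ?thesis .
qed

lemma mh_move_mass_le_emeasure:
  fixes P :: "real ^ 'd \<Rightarrow> real"
  assumes [measurable]: "P \<in> borel_measurable borel" and P: "\<And>x. P x \<ge> 0"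
    and [measurable]: "(\<lambda>(x, y). Q x y) \<in> borel_measurable (borel \<Otimes>\<^sub>M borel)"
    and Q: "\<And>x y. Q x y \<ge> 0" and Q_int: "\<And>x. (\<integral>\<^sup>+y. ennreal (Q x y) \<partial>lborel) \<le> 1"
    and [measurable]: "B \<in> sets borel"
  shows "mh_move_mass P Q B \<le> emeasure (density lborel (\<lambda>x. ennreal (P x))) B"
proof -
  have "mh_move_mass P Q B
      \<le> (\<integral>\<^sup>+x. ennreal (P x * indicator B x) * (\<integral>\<^sup>+y. ennreal (Q x y) \<partial>lborel) \<partial>lborel)"
    unfolding mh_move_mass_def using P Q
    by (intro nn_integral_mono)
      (simp add: nn_integral_cmult[symmetric] ennreal_mult[symmetric] indicator_def nn_integral_mono)
  also have "\<dots> \<le> (\<integral>\<^sup>+x. ennreal (P x) * indicator B x \<partial>lborel)"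
    using Q_int P by (intro nn_integral_mono) (auto simp: indicator_def intro: mult_left_le)
  also have "\<dots> = emeasure (density lborel (\<lambda>x. ennreal (P x))) B"
    by (simp add: emeasure_density)
  finally show ?thesis .
qed

text \<open>Accepted moves from \<open>A\<close> into \<open>N\<close> are controlled by the proposal, those ending
  outside \<open>N\<close> (by symmetry of the flux) by the stationary mass of the complement of \<open>N\<close>.\<close>
lemma mh_move_mass_le:
  fixes P :: "real ^ 'd \<Rightarrow> real"
  assumes [measurable]: "P \<in> borel_measurable borel" and P: "\<And>x. P x \<ge> 0"
    and P_int: "(\<integral>\<^sup>+x. ennreal (P x) \<partial>lborel) = 1"
    and [measurable]: "(\<lambda>(x, y). Q x y) \<in> borel_measurable (borel \<Otimes>\<^sub>M borel)"
    and Q: "\<And>x y. Q x y \<ge> 0" and Q_int: "\<And>x. (\<integral>\<^sup>+y. ennreal (Q x y) \<partial>lborel) \<le> 1"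
    and [measurable]: "A \<in> sets borel" and [measurable]: "N \<in> sets borel"
    and escape: "\<And>x. x \<in> A \<Longrightarrow> (\<integral>\<^sup>+y. ennreal (Q x y * indicator N y) \<partial>lborel) \<le> B"
  shows "mh_move_mass P Q A \<le> B + emeasure (density lborel (\<lambda>x. ennreal (P x))) (- N)"
proof -
  define H where "H x y = min (P x * Q x y) (P y * Q y x)" for x y
  have H: "0 \<le> H x y" "H x y \<le> P x * Q x y" for x y
    using P[of x] P[of y] Q[of x y] Q[of y x] by (simp_all add: H_def)
  have H_meas[measurable]: "(\<lambda>(x, y). H x y) \<in> borel_measurable (borel \<Otimes>\<^sub>M borel)"
    unfolding H_def by measurable
  have H_sym: "H x y = H y x" for x y by (simp add: H_def)
  have "- N \<in> sets borel" by simp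
  note swap = nn_integral_swap_symmetric[OF H_meas H_sym this]
  have pointwise: "ennreal (H x y * indicator A x)
      \<le> ennreal (P x * indicator A x) * ennreal (Q x y * indicator N y) + ennreal (H x y * indicator (- N) y)"
    for x y
  proof -
    have "ennreal (H x y * indicator A x)
        \<le> ennreal (P x * indicator A x * (Q x y * indicator N y) + H x y * indicator (- N) y)"
      using H[of x y] P[of x] Q[of x y] by (intro ennreal_leI) (auto simp: indicator_def)
    then show ?thesis
      using H[of x y] P[of x] Q[of x y] by (simp add: ennreal_plus ennreal_mult)
  qed
  have "(\<integral>\<^sup>+x. ennreal (P x * indicator A x) * (\<integral>\<^sup>+y. ennreal (Q x y * indicator N y) \<partial>lborel) \<partial>lborel)
      \<le> (\<integral>\<^sup>+x. ennreal (P x) * B \<partial>lborel)"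
    using escape by (intro nn_integral_mono) (auto simp: indicator_def intro: mult_left_mono)
  also have "\<dots> = B" by (simp add: nn_integral_multc P_int)
  finally have into_N: "(\<integral>\<^sup>+x. ennreal (P x * indicator A x) *
      (\<integral>\<^sup>+y. ennreal (Q x y * indicator N y) \<partial>lborel) \<partial>lborel) \<le> B" .
  have "mh_move_mass P Q A \<le> (\<integral>\<^sup>+x. \<integral>\<^sup>+y. ennreal (P x * indicator A x) * ennreal (Q x y * indicator N y)
        + ennreal (H x y * indicator (- N) y) \<partial>lborel \<partial>lborel)"
    unfolding mh_move_mass_def H_def[symmetric] by (intro nn_integral_mono pointwise)
  also have "\<dots> = (\<integral>\<^sup>+x. ennreal (P x * indicator A x) * (\<integral>\<^sup>+y. ennreal (Q x y * indicator N y) \<partial>lborel) \<partial>lborel)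
        + mh_move_mass P Q (- N)"
    by (simp add: nn_integral_add nn_integral_cmult swap mh_move_mass_def H_def[symmetric])
  also have "\<dots> \<le> B + emeasure (density lborel (\<lambda>x. ennreal (P x))) (- N)"
    using P Q Q_int by (intro add_mono into_N mh_move_mass_le_emeasure) auto
  finally show ?thesis .
qed

section \<open>The rescaled MALA kernel\<close>

lemma gauss_dens_strip_le:
  fixes m :: "real ^ 'd"
  assumes s: "s > 0" and D: "D \<ge> 0" "3 * D \<le> \<bar>m $ k\<bar>"
  shows "(\<integral>\<^sup>+y. ennreal (gauss_dens s m y * indicator {y. \<bar>y $ k\<bar> \<le> D} y) \<partial>lborel)
          \<le> ennreal (2 powr (real CARD('d) / 2) * exp (- D\<^sup>2 / s\<^sup>2))"
proof -
  have "(\<integral>\<^sup>+y. ennreal (gauss_dens s m y * indicator {y. \<bar>y $ k\<bar> \<le> D} y) \<partial>lborel)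
      \<le> ennreal (2 powr (real CARD('d) / 2) * exp (- (2 * D)\<^sup>2 / (4 * s\<^sup>2)))"
    using D by (intro gauss_dens_coord_tail[OF s, where k = k]) auto
  also have "- (2 * D)\<^sup>2 / (4 * s\<^sup>2) = - D\<^sup>2 / s\<^sup>2"
    by (simp add: power_mult_distrib)
  finally show ?thesis .
qed

lemma gauss_dens_drift_escapes_strip:
  fixes x v :: "real ^ 'd"
  assumes \<sigma>: "\<sigma> > 0" and c: "c > 0" and l: "l > 0"
    and v: "c \<le> \<bar>v $ k\<bar>" and x: "\<bar>x $ k\<bar> \<le> \<sigma>\<^sup>2 * c / (8 * l)"
  shows "(\<integral>\<^sup>+y. ennreal (gauss_dens \<sigma> (x + (\<sigma>\<^sup>2 / 2) *\<^sub>R scale_coord k (1 / l) v) y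
            * indicator {y. \<bar>y $ k\<bar> \<le> \<sigma>\<^sup>2 * c / (8 * l)} y) \<partial>lborel)
         \<le> ennreal (2 powr (real CARD('d) / 2) * exp (- \<sigma>\<^sup>2 * c\<^sup>2 / (64 * l\<^sup>2)))"
proof -
  define D where "D = \<sigma>\<^sup>2 * c / (8 * l)"
  have D: "D \<ge> 0" using \<sigma> c l by (simp add: D_def)
  have far: "3 * D \<le> \<bar>a + g\<bar>" if "\<bar>a\<bar> \<le> D" "4 * D \<le> \<bar>g\<bar>" for a g :: real
    using that by arith
  have "4 * D \<le> \<bar>\<sigma>\<^sup>2 / 2 * (v $ k / l)\<bar>"
    using v l \<sigma> by (simp add: D_def abs_mult field_simps)
  then have "3 * D \<le> \<bar>(x + (\<sigma>\<^sup>2 / 2) *\<^sub>R scale_coord k (1 / l) v) $ k\<bar>"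
    using far x by (simp add: D_def)
  moreover have "- D\<^sup>2 / \<sigma>\<^sup>2 = - \<sigma>\<^sup>2 * c\<^sup>2 / (64 * l\<^sup>2)"
    using \<sigma> l by (simp add: D_def power2_eq_square field_simps)
  ultimately show ?thesis
    using gauss_dens_strip_le[OF \<sigma> D] by (simp only: D_def)
qed

lemma mala_q_rescale_dens:
  fixes G :: "real ^ 'd \<Rightarrow> real ^ 'd"
  assumes "\<And>x. p x > 0" "\<And>x. ((\<lambda>y. ln (p y)) has_derivative (\<lambda>h. G x \<bullet> h)) (at x)" "l > 0"
  shows "mala_q s (rescale_dens k l p) x
       = gauss_dens s (x + (s\<^sup>2 / 2) *\<^sub>R scale_coord k (1 / l) (G (scale_coord k (1 / l) x)))"
  by (simp add: mala_q_def grad_ln_rescale_dens[OF assms] fun_eq_iff)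

lemma mala_rescaled_gap_le:
  fixes p :: "real ^ 'd \<Rightarrow> real" and G :: "real ^ 'd \<Rightarrow> real ^ 'd"
  assumes p_meas[measurable]: "p \<in> borel_measurable borel" and pos: "\<And>x. p x > 0"
    and p_int: "(\<integral>\<^sup>+x. ennreal (p x) \<partial>lborel) = 1"
    and G_cont: "continuous_on UNIV G"
    and G: "\<And>x. ((\<lambda>y. ln (p y)) has_derivative (\<lambda>h. G x \<bullet> h)) (at x)"
    and \<sigma>: "\<sigma> > 0" and K_meas[measurable]: "K \<in> sets borel"
    and a: "a = measure (density lborel (\<lambda>x. ennreal (p x))) K" "0 < a" "a < 1"
    and c: "c > 0" and K: "\<And>u. u \<in> K \<Longrightarrow> c \<le> \<bar>G u $ k\<bar> \<and> \<bar>u $ k\<bar> \<le> T"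
    and l: "l > 0" and l_small: "l\<^sup>2 * T \<le> \<sigma>\<^sup>2 * c / 8"
  shows "mh_gap (rescale_dens k l p) (mala_q \<sigma> (rescale_dens k l p))
     \<le> ennreal (1 / (a * (1 - a))) *
        (ennreal (2 powr (real CARD('d) / 2) * exp (- \<sigma>\<^sup>2 * c\<^sup>2 / (64 * l\<^sup>2)))
         + emeasure (density lborel (\<lambda>x. ennreal (p x))) {u. \<sigma>\<^sup>2 * c / (8 * l\<^sup>2) < norm u})"
proof -
  define P where "P = rescale_dens k l p"
  define S where "S = scale_coord k (1 / l)"
  define m where "m x = x + (\<sigma>\<^sup>2 / 2) *\<^sub>R S (G (S x))" for x
  define A where "A = S -` K"
  define N where "N = {y :: real ^ 'd. \<bar>y $ k\<bar> \<le> \<sigma>\<^sup>2 * c / (8 * l)}"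
  have p_nonneg: "p x \<ge> 0" for x using pos[of x] by simp
  have P_meas[measurable]: "P \<in> borel_measurable borel" by (simp add: P_def)
  have P_pos: "P x > 0" for x unfolding P_def using l pos by (rule rescale_dens_pos)
  have P_int: "(\<integral>\<^sup>+x. ennreal (P x) \<partial>lborel) = 1"
    using nn_integral_rescale_dens_eq[OF l p_meas p_nonneg] p_int by (simp add: P_def)
  have "continuous_on UNIV (S \<circ> G \<circ> S)"
    using linear_continuous_on[OF bounded_linear_scale_coord] G_cont
    by (intro continuous_on_compose) (auto simp: S_def intro: continuous_on_subset)
  then have "continuous_on UNIV m"
    unfolding m_def comp_def by (intro continuous_intros)
  then have [measurable]: "m \<in> borel_measurable borel" by (rule borel_measurable_continuous_onI)
  have Q: "mala_q \<sigma> P = (\<lambda>x. gauss_dens \<sigma> (m x))"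
    unfolding P_def m_def S_def by (simp add: fun_eq_iff mala_q_rescale_dens[OF pos G l])
  have [measurable]: "(\<lambda>(x, y). gauss_dens \<sigma> (m x) y) \<in> borel_measurable (borel \<Otimes>\<^sub>M borel)"
    unfolding gauss_dens_def by measurable
  have [measurable]: "A \<in> sets borel"
    using measurable_sets[OF scale_coord_measurable K_meas] by (simp add: A_def S_def)
  have "a = measure (density lborel (\<lambda>x. ennreal (P x))) A"
    using measure_rescale_dens_vimage[OF l p_meas p_nonneg K_meas] by (simp add: a(1) P_def A_def S_def)
  then have "mh_gap P (mala_q \<sigma> P) \<le> ennreal (1 / (a * (1 - a))) * mh_move_mass P (mala_q \<sigma> P) A"
    unfolding Q using P_meas P_pos P_int a(2,3) gauss_dens_nonneg
    by (intro mh_gap_le_move_mass) (simp_all add: less_imp_le)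
  moreover have "mh_move_mass P (mala_q \<sigma> P) A
      \<le> ennreal (2 powr (real CARD('d) / 2) * exp (- \<sigma>\<^sup>2 * c\<^sup>2 / (64 * l\<^sup>2)))
        + emeasure (density lborel (\<lambda>x. ennreal (P x))) (- N)"
    unfolding Q
  proof (intro mh_move_mass_le)
    fix x assume "x \<in> A"
    then have "c \<le> \<bar>G (S x) $ k\<bar>" and "\<bar>S x $ k\<bar> \<le> T" using K by (auto simp: A_def)
    moreover have "l * T \<le> \<sigma>\<^sup>2 * c / (8 * l)"
      using l_small l by (simp add: field_simps power2_eq_square)
    ultimately have "\<bar>x $ k\<bar> \<le> \<sigma>\<^sup>2 * c / (8 * l)"
      using l by (simp add: S_def abs_mult divide_le_eq mult.commute)
    with \<open>c \<le> \<bar>G (S x) $ k\<bar>\<close> show "(\<integral>\<^sup>+y. ennreal (gauss_dens \<sigma> (m x) y * indicator N y) \<partial>lborel)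
        \<le> ennreal (2 powr (real CARD('d) / 2) * exp (- \<sigma>\<^sup>2 * c\<^sup>2 / (64 * l\<^sup>2)))"
      unfolding m_def N_def S_def by (rule gauss_dens_drift_escapes_strip[OF \<sigma> c l])
  qed (use P_meas P_pos P_int gauss_dens_nonneg nn_integral_gauss_dens[OF \<sigma>, of "m _"]
      in \<open>simp_all add: N_def less_imp_le\<close>)
  moreover have "- N = {y. \<sigma>\<^sup>2 * c / (8 * l) < \<bar>y $ k\<bar>}" by (auto simp: N_def)
  then have "emeasure (density lborel (\<lambda>x. ennreal (P x))) (- N)
      \<le> emeasure (density lborel (\<lambda>x. ennreal (p x))) {u. \<sigma>\<^sup>2 * c / (8 * l\<^sup>2) < norm u}"
    using emeasure_rescale_dens_coord_gt_le[OF l p_meas p_nonneg, where k = k and r = "\<sigma>\<^sup>2 * c / (8 * l)"] l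
    by (simp add: P_def power2_eq_square mult.assoc)
  ultimately show ?thesis
    unfolding P_def by (meson add_left_mono mult_left_mono order_trans zero_le)
qed

section \<open>Consequences of the hypotheses\<close>

lemma emeasure_density_cball_pos:
  fixes p :: "'a::euclidean_space \<Rightarrow> real"
  assumes [measurable]: "p \<in> borel_measurable borel" and pos: "\<And>x. p x > 0" and r: "r > 0"
  shows "emeasure (density lborel (\<lambda>x. ennreal (p x))) (cball z r) > 0"
proof -
  have [measurable]: "cball z r \<in> sets borel" by simp
  have "emeasure lborel (cball z r) \<noteq> 0"
    using content_cball_pos[OF r, of z] by (auto simp: measure_def)
  then have "\<not> (AE x in lborel. x \<notin> cball z r)"
    by (subst AE_iff_null_sets[symmetric]) auto
  moreover have "(AE x in lborel. ennreal (p x) * indicator (cball z r) x = 0) \<longleftrightarrow> (AE x in lborel. x \<notin> cball z r)"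
    using pos by (intro AE_cong) (auto simp: indicator_def less_imp_neq[symmetric])
  moreover have "(\<integral>\<^sup>+x. ennreal (p x) * indicator (cball z r) x \<partial>lborel) = 0
      \<longleftrightarrow> (AE x in lborel. ennreal (p x) * indicator (cball z r) x = 0)"
    by (rule nn_integral_0_iff_AE) measurable
  ultimately show ?thesis
    by (simp add: emeasure_density zero_less_iff_neq_zero)
qed

lemma measure_density_disjoint_cballs:
  fixes p :: "'a::euclidean_space \<Rightarrow> real"
  assumes p_meas[measurable]: "p \<in> borel_measurable borel" and pos: "\<And>x. p x > 0"
    and p_int: "(\<integral>\<^sup>+x. ennreal (p x) \<partial>lborel) = 1"
    and r: "r > 0" and disj: "cball z r \<inter> cball z' r = {}"
  shows "0 < measure (density lborel (\<lambda>x. ennreal (p x))) (cball z r)"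
    and "measure (density lborel (\<lambda>x. ennreal (p x))) (cball z r) < 1"
proof -
  define M where "M = density lborel (\<lambda>x. ennreal (p x))"
  interpret prob_space M
    by standard (simp add: M_def emeasure_density p_int)
  have [simp]: "sets M = sets borel" by (simp add: M_def)
  show "0 < measure M (cball z r)"
    using emeasure_density_cball_pos[OF p_meas pos r] by (simp add: M_def[symmetric] emeasure_eq_measure)
  have "0 < measure M (cball z' r)"
    using emeasure_density_cball_pos[OF p_meas pos r] by (simp add: M_def[symmetric] emeasure_eq_measure)
  moreover have "measure M (cball z r) + measure M (cball z' r) \<le> 1"
    using finite_measure_Union[of "cball z r" "cball z' r"] prob_le_1[of "cball z r \<union> cball z' r"] disj
    by simp
  ultimately show "measure M (cball z r) < 1" by simp
qed

lemma liminf_partial_obtains_lower_bound: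
  fixes g :: "real ^ 'd \<Rightarrow> real" and k :: 'd
  assumes "Liminf at_infinity (\<lambda>t::real. INF x\<in>{x. x $ k = t}. ereal (\<bar>g x\<bar> * norm x powr \<gamma>)) > 0"
  obtains c b where "c > 0" and "\<And>u. b \<le> \<bar>u $ k\<bar> \<Longrightarrow> c < \<bar>g u\<bar> * norm u powr \<gamma>"
proof -
  obtain c where c: "0 < ereal c"
    "ereal c < Liminf at_infinity (\<lambda>t::real. INF x\<in>{x. x $ k = t}. ereal (\<bar>g x\<bar> * norm x powr \<gamma>))"
    using ereal_dense2[OF assms] by blast
  obtain b where b: "\<And>t::real. b \<le> norm t \<Longrightarrow>
      ereal c < (INF x\<in>{x. x $ k = t}. ereal (\<bar>g x\<bar> * norm x powr \<gamma>))"
    using less_LiminfD[OF c(2)] unfolding eventually_at_infinity by blast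
  have below: "c < \<bar>g u\<bar> * norm u powr \<gamma>" if "b \<le> \<bar>u $ k\<bar>" for u
  proof -
    have "ereal c < (INF x\<in>{x. x $ k = u $ k}. ereal (\<bar>g x\<bar> * norm x powr \<gamma>))"
      using that by (intro b) simp
    then have "ereal c < ereal (\<bar>g u\<bar> * norm u powr \<gamma>)"
      by (rule less_INF_D) simp
    then show ?thesis by simp
  qed
  show thesis
    by (rule that[OF _ below]) (use c(1) in simp_all)
qed

lemma liminf_partial_obtains_ball:
  fixes g :: "real ^ 'd \<Rightarrow> real" and k :: 'd
  assumes \<gamma>: "\<gamma> > 0"
    and lim: "Liminf at_infinity (\<lambda>t::real. INF x\<in>{x. x $ k = t}. ereal (\<bar>g x\<bar> * norm x powr \<gamma>)) > 0"
  obtains c u0 T where "c > 0" and "\<And>u. u \<in> cball u0 1 \<Longrightarrow> c \<le> \<bar>g u\<bar> \<and> \<bar>u $ k\<bar> \<le> T"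
    and "cball u0 1 \<inter> cball (- u0) 1 = {}"
proof -
  obtain c0 b where c0: "c0 > 0" and below: "\<And>u. b \<le> \<bar>u $ k\<bar> \<Longrightarrow> c0 < \<bar>g u\<bar> * norm u powr \<gamma>"
    using liminf_partial_obtains_lower_bound[OF lim] by blast
  define T0 where "T0 = max b 1"
  define T where "T = T0 + 2"
  define u0 where "u0 = (T0 + 1) *\<^sub>R axis k (1::real)"
  have in_ball: "T0 \<le> u $ k \<and> u $ k \<le> T \<and> norm u \<le> T" if "u \<in> cball u0 1" for u
  proof -
    have "\<bar>(u - u0) $ k\<bar> \<le> 1"
      using that component_le_norm_cart[of "u - u0" k] by (simp add: dist_norm norm_minus_commute)
    moreover have "norm u \<le> norm u0 + norm (u - u0)"
      using norm_triangle_ineq[of u0 "u - u0"] by simp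
    ultimately show ?thesis
      using that by (auto simp: u0_def T_def T0_def dist_norm norm_minus_commute)
  qed
  define c where "c = c0 / T powr \<gamma>"
  have T: "T > 0" by (simp add: T_def T0_def)
  show thesis
  proof
    show "c > 0" using c0 T by (simp add: c_def)
  next
    fix u assume u: "u \<in> cball u0 1"
    have "c0 < \<bar>g u\<bar> * norm u powr \<gamma>"
      using in_ball[OF u] by (intro below) (auto simp: T0_def)
    also have "\<dots> \<le> \<bar>g u\<bar> * T powr \<gamma>"
      using in_ball[OF u] \<gamma> by (intro mult_left_mono powr_mono2) auto
    finally show "c \<le> \<bar>g u\<bar> \<and> \<bar>u $ k\<bar> \<le> T"
      using in_ball[OF u] T by (auto simp: c_def divide_le_eq T0_def)
  next
    have "u $ k < T0" if "u \<in> cball (- u0) 1" for u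
    proof -
      have "\<bar>(u + u0) $ k\<bar> \<le> 1"
        using that component_le_norm_cart[of "u + u0" k] by (simp add: dist_norm norm_minus_commute)
      then show ?thesis by (simp add: u0_def T0_def)
    qed
    then show "cball u0 1 \<inter> cball (- u0) 1 = {}"
      using in_ball by force
  qed
qed

lemma limsup_exp_tail_obtains_bound:
  fixes f :: "real \<Rightarrow> real"
  assumes lim: "Limsup at_top (\<lambda>t. ereal (f t * exp (t powr \<beta>))) < \<infinity>" and f: "\<And>t. f t \<ge> 0"
  obtains C t0 where "C \<ge> 0" and "\<And>t. t0 \<le> t \<Longrightarrow> f t \<le> C * exp (- (t powr \<beta>))"
proof -
  obtain C where "Limsup at_top (\<lambda>t. ereal (f t * exp (t powr \<beta>))) < ereal C"
    using ereal_dense2[OF lim] by blast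
  from Limsup_lessD[OF this] obtain t0 where t0: "\<And>t. t0 \<le> t \<Longrightarrow> f t * exp (t powr \<beta>) < C"
    unfolding eventually_at_top_linorder by auto
  show thesis
  proof
    have "0 \<le> f t0 * exp (t0 powr \<beta>)" using f[of t0] by simp
    then show "C \<ge> 0" using t0[of t0] by linarith
    show "f t \<le> C * exp (- (t powr \<beta>))" if "t0 \<le> t" for t
    proof -
      have "f t = f t * exp (t powr \<beta>) * exp (- (t powr \<beta>))"
        by (simp add: mult.assoc exp_minus_inverse)
      also have "\<dots> \<le> C * exp (- (t powr \<beta>))"
        using t0[OF that] by (intro mult_right_mono) auto
      finally show ?thesis .
    qed
  qed
qed

lemma powr_neg_le_divide_square:
  fixes l E \<alpha> :: real
  assumes l: "0 < l" "l \<le> 1" "l \<le> E" and \<alpha>: "0 < \<alpha>" "\<alpha> \<le> 1"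
  shows "l powr (- \<alpha>) \<le> E / l\<^sup>2"
proof -
  have "l powr 1 \<le> l powr \<alpha>" using l \<alpha> by (intro powr_mono') auto
  then have l_\<alpha>: "l \<le> l powr \<alpha>" using l by simp
  have "l\<^sup>2 \<le> E * l" using l by (simp add: power2_eq_square mult_right_mono)
  also have "\<dots> \<le> E * l powr \<alpha>" using l_\<alpha> l by (intro mult_left_mono) auto
  finally have "l\<^sup>2 \<le> E * l powr \<alpha>" .
  moreover have "l powr \<alpha> > 0" using l by simp
  ultimately show ?thesis
    using l by (simp add: powr_minus_divide field_simps)
qed

lemma powr_neg_le_powr_divide_square:
  fixes l D \<alpha> \<beta> :: real
  assumes l: "0 < l" "l \<le> 1" "l \<le> D powr (2/3)" and \<alpha>: "0 < \<alpha>" "\<alpha> \<le> \<beta> / 2" and D: "D > 0"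
  shows "l powr (- \<alpha>) \<le> (D / l\<^sup>2) powr \<beta>"
proof -
  have "l\<^sup>2 = l powr 2" using l by (simp add: powr_realpow)
  then have "(l\<^sup>2) powr \<beta> = l powr (2 * \<beta>)" by (simp add: powr_powr)
  then have rhs: "(D / l\<^sup>2) powr \<beta> = D powr \<beta> * l powr (- (2 * \<beta>))"
    by (simp add: powr_divide powr_minus_divide)
  have lhs: "l powr (- \<alpha>) = l powr (2 * \<beta> - \<alpha>) * l powr (- (2 * \<beta>))"
    by (simp add: powr_add[symmetric])
  have "l powr (2 * \<beta> - \<alpha>) \<le> l powr (3 * \<beta> / 2)"
    using l \<alpha> by (intro powr_mono') auto
  also have "\<dots> \<le> (D powr (2/3)) powr (3 * \<beta> / 2)"
    using l \<alpha> by (intro powr_mono2) auto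
  also have "\<dots> = D powr \<beta>" by (simp add: powr_powr)
  finally show ?thesis
    unfolding lhs rhs by (rule mult_right_mono) simp
qed

lemma continuous_on_of_ln_has_derivative:
  fixes p :: "'a::real_normed_vector \<Rightarrow> real"
  assumes pos: "\<And>x. p x > 0" and deriv: "\<And>x. ((\<lambda>y. ln (p y)) has_derivative D x) (at x)"
  shows "continuous_on UNIV p"
proof -
  have "continuous_on UNIV (\<lambda>y. ln (p y))"
    using deriv has_derivative_at_withinI by (blast intro: has_derivative_continuous_on)
  then have "continuous_on UNIV (\<lambda>y. exp (ln (p y)))" by (rule continuous_on_exp)
  then show ?thesis using pos by simp
qed

section \<open>Decay of the spectral gap\<close>

lemma mala_rescaled_gap_exp_le:
  fixes p :: "real ^ 'd \<Rightarrow> real" and G :: "real ^ 'd \<Rightarrow> real ^ 'd"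
  assumes p_meas[measurable]: "p \<in> borel_measurable borel" and pos: "\<And>x. p x > 0"
    and p_int: "(\<integral>\<^sup>+x. ennreal (p x) \<partial>lborel) = 1"
    and G_cont: "continuous_on UNIV G"
    and G: "\<And>x. ((\<lambda>y. ln (p y)) has_derivative (\<lambda>h. G x \<bullet> h)) (at x)"
    and \<sigma>: "\<sigma> > 0" and K_meas: "K \<in> sets borel"
    and a: "a = measure (density lborel (\<lambda>x. ennreal (p x))) K" "0 < a" "a < 1"
    and c: "c > 0" and K: "\<And>u. u \<in> K \<Longrightarrow> c \<le> \<bar>G u $ k\<bar> \<and> \<bar>u $ k\<bar> \<le> T"
    and tail: "\<And>t. R \<le> t \<Longrightarrow>
      measure (density lborel (\<lambda>x. ennreal (p x))) {u. t < norm u} \<le> C * exp (- (t powr \<beta>))"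
    and C: "C \<ge> 0" and \<alpha>: "0 < \<alpha>" "\<alpha> \<le> 1" "\<alpha> \<le> \<beta> / 2"
    and l: "0 < l" "l \<le> 1" "l \<le> \<sigma>\<^sup>2 * c\<^sup>2 / 64" "l \<le> (\<sigma>\<^sup>2 * c / 8) powr (2/3)"
      "l\<^sup>2 * T \<le> \<sigma>\<^sup>2 * c / 8" "l\<^sup>2 * R \<le> \<sigma>\<^sup>2 * c / 8"
  shows "mh_gap (rescale_dens k l p) (mala_q \<sigma> (rescale_dens k l p)) * ennreal (exp (l powr (- \<alpha>)))
      \<le> ennreal (1 / (a * (1 - a)) * (2 powr (real CARD('d) / 2) + C))"
proof -
  define D where "D = \<sigma>\<^sup>2 * c / 8"
  define E where "E = \<sigma>\<^sup>2 * c\<^sup>2 / 64"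
  define \<kappa> where "\<kappa> = 1 / (a * (1 - a))"
  define X where "X = exp (l powr (- \<alpha>))"
  define b where "b = 2 powr (real CARD('d) / 2) * exp (- E / l\<^sup>2)"
  define t where "t = C * exp (- ((D / l\<^sup>2) powr \<beta>))"
  have D: "D > 0" and \<kappa>: "\<kappa> > 0" using \<sigma> c a by (simp_all add: D_def \<kappa>_def)
  have b: "b \<ge> 0" and t: "t \<ge> 0" using C by (simp_all add: b_def t_def)
  interpret \<pi>: prob_space "density lborel (\<lambda>x. ennreal (p x))"
    by standard (simp add: emeasure_density p_int)
  have "R \<le> D / l\<^sup>2" using l by (simp add: D_def field_simps)
  then have tail_l: "emeasure (density lborel (\<lambda>x. ennreal (p x))) {u. D / l\<^sup>2 < norm u} \<le> ennreal t"
    unfolding t_def \<pi>.emeasure_eq_measure by (intro ennreal_leI tail)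
  have "- \<sigma>\<^sup>2 * c\<^sup>2 / (64 * l\<^sup>2) = - E / l\<^sup>2" and "\<sigma>\<^sup>2 * c / (8 * l\<^sup>2) = D / l\<^sup>2"
    by (simp_all add: D_def E_def)
  then have "mh_gap (rescale_dens k l p) (mala_q \<sigma> (rescale_dens k l p))
      \<le> ennreal \<kappa> * (ennreal b + emeasure (density lborel (\<lambda>x. ennreal (p x))) {u. D / l\<^sup>2 < norm u})"
    using mala_rescaled_gap_le[OF p_meas pos p_int G_cont G \<sigma> K_meas a c K l(1,5)]
    unfolding b_def \<kappa>_def by simp
  also have "\<dots> \<le> ennreal \<kappa> * (ennreal b + ennreal t)"
    by (intro mult_left_mono add_left_mono tail_l) simp
  finally have "mh_gap (rescale_dens k l p) (mala_q \<sigma> (rescale_dens k l p)) * ennreal X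
      \<le> ennreal \<kappa> * (ennreal b + ennreal t) * ennreal X"
    by (rule mult_right_mono) simp
  also have "\<dots> = ennreal (\<kappa> * (b + t) * X)"
    using \<kappa> b t by (simp add: X_def ennreal_plus ennreal_mult)
  finally have gap: "mh_gap (rescale_dens k l p) (mala_q \<sigma> (rescale_dens k l p)) * ennreal X
      \<le> ennreal (\<kappa> * (b * X + t * X))"
    by (simp add: algebra_simps)
  have "exp (- E / l\<^sup>2) * X \<le> 1"
    using powr_neg_le_divide_square[of l E \<alpha>] l \<alpha> by (simp add: X_def E_def exp_add[symmetric])
  then have "b * X \<le> 2 powr (real CARD('d) / 2)"
    by (simp add: b_def mult.assoc mult_left_le)
  moreover have "exp (- ((D / l\<^sup>2) powr \<beta>)) * X \<le> 1"
    using powr_neg_le_powr_divide_square[of l D \<alpha> \<beta>] l \<alpha> D by (simp add: X_def D_def exp_add[symmetric])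
  then have "t * X \<le> C"
    using C by (simp add: t_def mult.assoc mult_left_le)
  ultimately have "\<kappa> * (b * X + t * X) \<le> \<kappa> * (2 powr (real CARD('d) / 2) + C)"
    using \<kappa> by (simp add: add_mono mult_left_mono)
  with gap show ?thesis
    unfolding X_def \<kappa>_def by (meson ennreal_leI order_trans)
qed

lemma Limsup_mala_rescaled_gap_exp_finite:
  fixes p :: "real ^ 'd \<Rightarrow> real" and G :: "real ^ 'd \<Rightarrow> real ^ 'd"
  assumes p_meas: "p \<in> borel_measurable borel" and pos: "\<And>x. p x > 0"
    and p_int: "(\<integral>\<^sup>+x. ennreal (p x) \<partial>lborel) = 1"
    and G_cont: "continuous_on UNIV G"
    and G: "\<And>x. ((\<lambda>y. ln (p y)) has_derivative (\<lambda>h. G x \<bullet> h)) (at x)"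
    and \<sigma>: "\<sigma> > 0" and K_meas: "K \<in> sets borel"
    and a: "a = measure (density lborel (\<lambda>x. ennreal (p x))) K" "0 < a" "a < 1"
    and c: "c > 0" and K: "\<And>u. u \<in> K \<Longrightarrow> c \<le> \<bar>G u $ k\<bar> \<and> \<bar>u $ k\<bar> \<le> T"
    and tail: "\<And>t. R \<le> t \<Longrightarrow>
      measure (density lborel (\<lambda>x. ennreal (p x))) {u. t < norm u} \<le> C * exp (- (t powr \<beta>))"
    and C: "C \<ge> 0" and \<alpha>: "0 < \<alpha>" "\<alpha> \<le> 1" "\<alpha> \<le> \<beta> / 2"
  shows "Limsup (at_right 0) (\<lambda>l. mh_gap (rescale_dens k l p) (mala_q \<sigma> (rescale_dens k l p))
            * ennreal (exp (l powr (- \<alpha>)))) < \<infinity>"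
proof -
  define D where "D = \<sigma>\<^sup>2 * c / 8"
  have D: "D > 0" using \<sigma> c by (simp add: D_def)
  have lim: "((\<lambda>l. l) \<longlongrightarrow> 0) (at_right (0::real))"
    "((\<lambda>l. l\<^sup>2 * T) \<longlongrightarrow> 0) (at_right (0::real))" "((\<lambda>l. l\<^sup>2 * R) \<longlongrightarrow> 0) (at_right (0::real))"
    by (auto intro!: tendsto_eq_intros)
  have "\<forall>\<^sub>F l in at_right 0. 0 < (l::real)" by (rule eventually_at_right_less)
  moreover have "\<forall>\<^sub>F l in at_right 0. l < min 1 (min (\<sigma>\<^sup>2 * c\<^sup>2 / 64) (D powr (2/3)))"
    using \<sigma> c D by (intro order_tendstoD(2)[OF lim(1)]) simp
  moreover have "\<forall>\<^sub>F l in at_right 0. l\<^sup>2 * T < D"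
    using D by (intro order_tendstoD(2)[OF lim(2)])
  moreover have "\<forall>\<^sub>F l in at_right 0. l\<^sup>2 * R < D"
    using D by (intro order_tendstoD(2)[OF lim(3)])
  ultimately have "\<forall>\<^sub>F l in at_right 0. mh_gap (rescale_dens k l p) (mala_q \<sigma> (rescale_dens k l p))
      * ennreal (exp (l powr (- \<alpha>))) \<le> ennreal (1 / (a * (1 - a)) * (2 powr (real CARD('d) / 2) + C))"
  proof eventually_elim
    case (elim l)
    then show ?case
      by (intro mala_rescaled_gap_exp_le[OF p_meas pos p_int G_cont G \<sigma> K_meas a c K tail C \<alpha>])
        (auto simp: D_def)
  qed
  from Limsup_bounded[OF this] show ?thesis
    by (rule order.strict_trans1) simp
qed

theorem theorem2p3:
  fixes p :: "real ^ 'd \<Rightarrow> real" and k :: 'd and \<sigma> \<gamma> \<beta> :: real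
  assumes pos: "\<And>x. p x > 0"
    and dens: "(\<integral>\<^sup>+ x. ennreal (p x) \<partial>lborel) = 1"
    and C1: "log_C1 p"
    and \<gamma>_pos: "\<gamma> > 0"
    and cond_i: "Liminf at_infinity (\<lambda>t::real. INF x\<in>{x. x $ k = t}.
                   ereal (\<bar>grad (\<lambda>z. ln (p z)) x $ k\<bar> * norm x powr \<gamma>)) > 0"
    and \<beta>_pos: "\<beta> > 0"
    and cond_ii: "Limsup at_top (\<lambda>t. ereal (measure (density lborel (\<lambda>x. ennreal (p x))) {x. norm x > t}
                   * exp (t powr \<beta>))) < \<infinity>"
    and \<sigma>_pos: "\<sigma> > 0"
  shows "Limsup (at_right 0) (\<lambda>l. mh_gap (rescale_dens k l p) (mala_q \<sigma> (rescale_dens k l p))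
            * ennreal (exp (l powr (- min (min (\<beta> / 2) (\<beta> / \<gamma>)) (2 / 3))))) < \<infinity>"
proof -
  define \<alpha> where "\<alpha> = min (min (\<beta> / 2) (\<beta> / \<gamma>)) (2 / 3)"
  have \<alpha>: "0 < \<alpha>" "\<alpha> \<le> 1" "\<alpha> \<le> \<beta> / 2" using \<beta>_pos \<gamma>_pos by (auto simp: \<alpha>_def min_def)
  obtain G where G_cont: "continuous_on UNIV G"
    and G: "\<And>x. ((\<lambda>y. ln (p y)) has_derivative (\<lambda>h. G x \<bullet> h)) (at x)"
    using C1 unfolding log_C1_def by blast
  have p_meas: "p \<in> borel_measurable borel"
    by (rule borel_measurable_continuous_onI[OF continuous_on_of_ln_has_derivative[OF pos G]])
  have "grad (\<lambda>z. ln (p z)) = G" by (intro ext grad_eqI G)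
  with cond_i have "Liminf at_infinity (\<lambda>t::real. INF x\<in>{x. x $ k = t}.
      ereal (\<bar>G x $ k\<bar> * norm x powr \<gamma>)) > 0" by simp
  then obtain c u0 T where c: "c > 0" and K: "\<And>u. u \<in> cball u0 1 \<Longrightarrow> c \<le> \<bar>G u $ k\<bar> \<and> \<bar>u $ k\<bar> \<le> T"
    and disj: "cball u0 1 \<inter> cball (- u0) 1 = {}"
    by (rule liminf_partial_obtains_ball[OF \<gamma>_pos]) auto
  obtain C R where C: "C \<ge> 0" and tail: "\<And>t. R \<le> t \<Longrightarrow>
      measure (density lborel (\<lambda>x. ennreal (p x))) {u. t < norm u} \<le> C * exp (- (t powr \<beta>))"
    using limsup_exp_tail_obtains_bound[OF cond_ii measure_nonneg] by blast
  note a = measure_density_disjoint_cballs[OF p_meas pos dens zero_less_one disj]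
  show ?thesis
    unfolding \<alpha>_def[symmetric]
    by (rule Limsup_mala_rescaled_gap_exp_finite[OF p_meas pos dens G_cont G \<sigma>_pos _ refl a c _ _ C \<alpha>])
      (use K tail in auto)
qed

end
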